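(* The relations ${\rm Abv}(x,y,z):=(y<x\wedge xy\bot z)\vee(z<x\wedge xz\bot y)$ and $U(x,y,z):=(y<x\vee z<x)\wedge(y\bot z)$ are primitive positive definable in $(P;{\rm Low})$.
   Context: $(P;\leq)$ is the random partial order (Fraïssé limit of all finite partial orders); $x<y$ means $x\leq y\wedge x\neq y$; $x\bot y$ means $x,y$ incomparable; $xy\bot z$ abbreviates $x\bot z\wedge y\bot z$, and $z\bot xy$ likewise. ${\rm Low}(x,y,z):=(x<y\wedge z\bot xy)\vee(x<z\wedge y\bot xz)$. Primitive positive definable means definable by a formula $\exists\bar y(\psi_1\wedge\cdots\wedge\psi_m)$ with atomic $\psi_i$ (including equalities). *)

theory Defs
  imports Main "HOL-Library.Countable_Set"
begin

text \<open>The random partial order, characterised (up to isomorphism) as the countable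
partial order with the one-point extension property: for every finite A, every
down-closed D and up-closed U in A with D strictly below U, there is a new point
above D, below U and incomparable to the rest of A.\<close>

definition random_po :: "('a \<Rightarrow> 'a \<Rightarrow> bool) \<Rightarrow> bool" where
  "random_po le \<longleftrightarrow>
     countable (UNIV :: 'a set) \<and>
     (\<forall>x. le x x) \<and>
     (\<forall>x y. le x y \<and> le y x \<longrightarrow> x = y) \<and>
     (\<forall>x y z. le x y \<and> le y z \<longrightarrow> le x z) \<and>
     (\<forall>A D U. finite A \<and> D \<subseteq> A \<and> U \<subseteq> A \<and>
        (\<forall>a\<in>A. \<forall>d\<in>D. le a d \<longrightarrow> a \<in> D) \<and>
        (\<forall>a\<in>A. \<forall>u\<in>U. le u a \<longrightarrow> a \<in> U) \<and>
        (\<forall>d\<in>D. \<forall>u\<in>U. le d u \<and> d \<noteq> u)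
        \<longrightarrow> (\<exists>x. x \<notin> A \<and> (\<forall>d\<in>D. le d x) \<and> (\<forall>u\<in>U. le x u) \<and>
                 (\<forall>a\<in>A - D - U. \<not> le a x \<and> \<not> le x a)))"

definition lt :: "('a \<Rightarrow> 'a \<Rightarrow> bool) \<Rightarrow> 'a \<Rightarrow> 'a \<Rightarrow> bool" where
  "lt le x y \<longleftrightarrow> le x y \<and> x \<noteq> y"

definition incomp :: "('a \<Rightarrow> 'a \<Rightarrow> bool) \<Rightarrow> 'a \<Rightarrow> 'a \<Rightarrow> bool" where
  "incomp le x y \<longleftrightarrow> \<not> le x y \<and> \<not> le y x"

definition Low :: "('a \<Rightarrow> 'a \<Rightarrow> bool) \<Rightarrow> 'a \<Rightarrow> 'a \<Rightarrow> 'a \<Rightarrow> bool" where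
  "Low le x y z \<longleftrightarrow>
     (lt le x y \<and> incomp le x z \<and> incomp le y z) \<or>
     (lt le x z \<and> incomp le x y \<and> incomp le z y)"

definition Abv :: "('a \<Rightarrow> 'a \<Rightarrow> bool) \<Rightarrow> 'a \<Rightarrow> 'a \<Rightarrow> 'a \<Rightarrow> bool" where
  "Abv le x y z \<longleftrightarrow>
     (lt le y x \<and> incomp le x z \<and> incomp le y z) \<or>
     (lt le z x \<and> incomp le x y \<and> incomp le z y)"

definition Urel :: "('a \<Rightarrow> 'a \<Rightarrow> bool) \<Rightarrow> 'a \<Rightarrow> 'a \<Rightarrow> 'a \<Rightarrow> bool" where
  "Urel le x y z \<longleftrightarrow> (lt le y x \<or> lt le z x) \<and> incomp le y z"

text \<open>Primitive positive formulas over one ternary relation symbol: atoms are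
R(v_i,v_j,v_k) or v_i = v_j; variables 0,1,2 are the free variables, all others are
existentially quantified.\<close>

datatype pp_atom = RAt nat nat nat | EqAt nat nat

fun sat_atom :: "('a \<Rightarrow> 'a \<Rightarrow> 'a \<Rightarrow> bool) \<Rightarrow> (nat \<Rightarrow> 'a) \<Rightarrow> pp_atom \<Rightarrow> bool" where
  "sat_atom R v (RAt i j k) = R (v i) (v j) (v k)"
| "sat_atom R v (EqAt i j) = (v i = v j)"

definition pp_definable3 ::
  "('a \<Rightarrow> 'a \<Rightarrow> 'a \<Rightarrow> bool) \<Rightarrow> ('a \<Rightarrow> 'a \<Rightarrow> 'a \<Rightarrow> bool) \<Rightarrow> bool" where
  "pp_definable3 R S \<longleftrightarrow>
     (\<exists>phi :: pp_atom list. \<forall>x y z.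
        S x y z \<longleftrightarrow>
        (\<exists>v :: nat \<Rightarrow> 'a. v 0 = x \<and> v 1 = y \<and> v 2 = z \<and> (\<forall>a\<in>set phi. sat_atom R v a)))"

end

theory Submission
  imports Defs
begin

text \<open>In any partial order, Low(y,x,v) \<and> Low(z,x,v) \<and> Low(u,y,z) \<and> Low(s,u,v) implies
U(x,y,z): the third atom gives y \<bottom> z and puts u below y or z; if neither y nor z were
below x, the first two atoms would put both y and z below v, hence u below v, against
u \<bottom> v from the last atom. Adding Low(u',y,z) \<and> Low(t,u',x) yields a point u' below y or z
with u' \<bottom> x, so that one of y, z is not below x; this cuts U down to Abv.
Conversely, in the random partial order all witnesses exist, because one can always adjoin
a point strictly below (above) a given point and incomparable to everything not above
(below) it.\<close>

lemma random_po_order: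
  assumes "random_po le"
  shows "reflp le" "antisymp le" "transp le"
proof -
  have "\<forall>x. le x x"
    using assms unfolding random_po_def by (elim conjE)
  then show "reflp le"
    by (auto intro: reflpI)
  have "\<forall>x y. le x y \<and> le y x \<longrightarrow> x = y"
    using assms unfolding random_po_def by (elim conjE)
  then show "antisymp le"
    by (auto intro: antisympI)
  have "\<forall>x y z. le x y \<and> le y z \<longrightarrow> le x z"
    using assms unfolding random_po_def by (elim conjE)
  then show "transp le"
    by (auto intro: transpI)
qed

lemma random_po_extension:
  assumes "random_po le" "finite A" "D \<subseteq> A" "U \<subseteq> A"
    "\<forall>a\<in>A. \<forall>d\<in>D. le a d \<longrightarrow> a \<in> D"
    "\<forall>a\<in>A. \<forall>u\<in>U. le u a \<longrightarrow> a \<in> U"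
    "\<forall>d\<in>D. \<forall>u\<in>U. le d u \<and> d \<noteq> u"
  obtains x where "x \<notin> A" "\<forall>d\<in>D. le d x" "\<forall>u\<in>U. le x u"
    "\<forall>a\<in>A - D - U. \<not> le a x \<and> \<not> le x a"
proof -
  have "\<forall>A D U. finite A \<and> D \<subseteq> A \<and> U \<subseteq> A \<and>
        (\<forall>a\<in>A. \<forall>d\<in>D. le a d \<longrightarrow> a \<in> D) \<and>
        (\<forall>a\<in>A. \<forall>u\<in>U. le u a \<longrightarrow> a \<in> U) \<and>
        (\<forall>d\<in>D. \<forall>u\<in>U. le d u \<and> d \<noteq> u)
        \<longrightarrow> (\<exists>x. x \<notin> A \<and> (\<forall>d\<in>D. le d x) \<and> (\<forall>u\<in>U. le x u) \<and>
                 (\<forall>a\<in>A - D - U. \<not> le a x \<and> \<not> le x a))"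
    using assms(1) unfolding random_po_def by (elim conjE)
  then have "\<exists>x. x \<notin> A \<and> (\<forall>d\<in>D. le d x) \<and> (\<forall>u\<in>U. le x u) \<and>
                 (\<forall>a\<in>A - D - U. \<not> le a x \<and> \<not> le x a)"
    using assms(2-) by simp
  then show thesis
    using that by blast
qed

lemma random_po_converse:
  assumes "random_po le"
  shows "random_po (\<lambda>x y. le y x)"
  unfolding random_po_def
proof (intro conjI allI impI)
  show "countable (UNIV :: 'a set)"
    using assms unfolding random_po_def by (elim conjE)
  show "le x x" for x
    using random_po_order(1)[OF assms] by (simp add: reflpD)
  show "le y x \<and> le x y \<Longrightarrow> x = y" for x y
    using random_po_order(2)[OF assms] by (auto dest: antisympD)
  show "le y x \<and> le z y \<Longrightarrow> le z x" for x y z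
    using random_po_order(3)[OF assms] by (meson transpE)
  fix A D U
  assume "finite A \<and> D \<subseteq> A \<and> U \<subseteq> A \<and>
    (\<forall>a\<in>A. \<forall>d\<in>D. le d a \<longrightarrow> a \<in> D) \<and> (\<forall>a\<in>A. \<forall>u\<in>U. le a u \<longrightarrow> a \<in> U) \<and>
    (\<forall>d\<in>D. \<forall>u\<in>U. le u d \<and> d \<noteq> u)"
  then have hyps: "finite A" "U \<subseteq> A" "D \<subseteq> A"
    "\<forall>a\<in>A. \<forall>u\<in>U. le a u \<longrightarrow> a \<in> U" "\<forall>a\<in>A. \<forall>d\<in>D. le d a \<longrightarrow> a \<in> D"
    "\<forall>d\<in>U. \<forall>u\<in>D. le d u \<and> d \<noteq> u"
    by blast+
  obtain x where "x \<notin> A" "\<forall>u\<in>U. le u x" "\<forall>d\<in>D. le x d"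
    "\<forall>a\<in>A - U - D. \<not> le a x \<and> \<not> le x a"
    using random_po_extension[OF assms hyps] by blast
  moreover have "A - U - D = A - D - U"
    by blast
  ultimately show "\<exists>x. x \<notin> A \<and> (\<forall>d\<in>D. le x d) \<and> (\<forall>u\<in>U. le u x) \<and>
    (\<forall>a\<in>A - D - U. \<not> le x a \<and> \<not> le a x)"
    by auto
qed

lemma random_po_ex_incomp:
  assumes "random_po le" "finite A"
  obtains x where "x \<notin> A" "\<forall>b\<in>A. incomp le x b"
proof (rule random_po_extension[OF assms, of "{}" "{}"])
  fix x
  assume "x \<notin> A" "\<forall>a\<in>A - {} - {}. \<not> le a x \<and> \<not> le x a"
  then show thesis
    using that unfolding incomp_def by simp
qed simp_all

lemma random_po_ex_below:
  assumes rp: "random_po le" and "finite A" "a \<in> A"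
  obtains x where "x \<notin> A" "lt le x a" "\<forall>b\<in>A. \<not> le a b \<longrightarrow> incomp le x b"
proof (rule random_po_extension[OF rp \<open>finite A\<close>, of "{}" "{b\<in>A. le a b}"])
  show "\<forall>b\<in>A. \<forall>u\<in>{b\<in>A. le a b}. le u b \<longrightarrow> b \<in> {b\<in>A. le a b}"
    using random_po_order(3)[OF rp] by (auto dest: transpD)
  fix x
  assume x: "x \<notin> A" "\<forall>u\<in>{b\<in>A. le a b}. le x u"
    "\<forall>b\<in>A - {} - {b\<in>A. le a b}. \<not> le b x \<and> \<not> le x b"
  have "le x a"
    using x(2) \<open>a \<in> A\<close> random_po_order(1)[OF rp] by (simp add: reflpD)
  then show thesis
    using that x \<open>a \<in> A\<close> unfolding lt_def incomp_def by auto
qed auto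

lemma random_po_ex_above:
  assumes "random_po le" "finite A" "a \<in> A"
  obtains x where "x \<notin> A" "lt le a x" "\<forall>b\<in>A. \<not> le b a \<longrightarrow> incomp le x b"
proof (rule random_po_ex_below[OF random_po_converse[OF assms(1)] assms(2,3)])
  fix x
  assume "x \<notin> A" "lt (\<lambda>x y. le y x) x a" "\<forall>b\<in>A. \<not> le b a \<longrightarrow> incomp (\<lambda>x y. le y x) x b"
  then show thesis
    using that unfolding lt_def incomp_def by auto
qed

lemma Low_commute: "Low le x y z = Low le x z y"
  unfolding Low_def by blast

lemma Low_imp_incomp: "Low le x y z \<Longrightarrow> incomp le y z"
  unfolding Low_def incomp_def by blast

lemma random_po_ex_Low:
  assumes "random_po le" "finite A" "incomp le y z"
  obtains u where "Low le u y z" "\<forall>b\<in>A. \<not> le y b \<longrightarrow> incomp le u b"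
proof -
  obtain u where "u \<notin> insert y (insert z A)" "lt le u y"
    "\<forall>b\<in>insert y (insert z A). \<not> le y b \<longrightarrow> incomp le u b"
    using random_po_ex_below[OF assms(1), of "insert y (insert z A)" y] assms(2) by auto
  then show thesis
    using that \<open>incomp le y z\<close> unfolding Low_def incomp_def by auto
qed

lemma Urel_if_Low_pattern:
  assumes "transp le"
    and "Low le y x v" "Low le z x v" "Low le u y z" "Low le s u v"
  shows "Urel le x y z"
proof -
  have "lt le y x \<or> lt le z x"
  proof (rule ccontr)
    assume "\<not> (lt le y x \<or> lt le z x)"
    then have "le y v" "le z v"
      using assms(2,3) unfolding Low_def lt_def by auto
    moreover have "le u y \<or> le u z"
      using assms(4) unfolding Low_def lt_def by auto
    ultimately have "le u v"
      using \<open>transp le\<close> by (meson transpE)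
    then show False
      using Low_imp_incomp[OF assms(5)] unfolding incomp_def by simp
  qed
  then show ?thesis
    using Low_imp_incomp[OF assms(4)] unfolding Urel_def by simp
qed

lemma Abv_if_Urel_Low_pattern:
  assumes "transp le"
    and "Urel le x y z" "Low le u y z" "Low le t u x"
  shows "Abv le x y z"
proof -
  have "incomp le u x"
    using Low_imp_incomp[OF assms(4)] .
  then have "\<not> le y x" if "le u y" for y
    using that \<open>transp le\<close> unfolding incomp_def by (meson transpE)
  moreover have "\<not> le x y" if "lt le z x" "incomp le y z" for y z
    using that \<open>transp le\<close> unfolding lt_def incomp_def by (meson transpE)
  ultimately show ?thesis
    using assms(2,3) unfolding Abv_def Urel_def Low_def lt_def incomp_def by metis
qed

lemma random_po_ex_Low_pattern_Urel:
  assumes rp: "random_po le" and "lt le y x" "incomp le y z"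
  shows "\<exists>v u s. Low le y x v \<and> Low le z x v \<and> Low le u y z \<and> Low le s u v"
proof -
  have "\<not> le x z"
    using assms(2,3) random_po_order(3)[OF rp] unfolding lt_def incomp_def by (meson transpE)
  obtain v where v: "Low le y x v" "Low le z x v" "\<not> le y v"
  proof (cases "le z x")
    case True
    obtain v where "\<forall>b\<in>{x, y, z}. incomp le v b"
      using random_po_ex_incomp[OF rp, of "{x, y, z}"] by auto
    moreover have "z \<noteq> x"
      using True assms(2,3) unfolding lt_def incomp_def by blast
    ultimately show thesis
      using that[of v] True assms(2,3) unfolding Low_def lt_def incomp_def by auto
  next
    case False
    obtain v where "lt le z v" "\<forall>b\<in>{x, y, z}. \<not> le b z \<longrightarrow> incomp le v b"
      using random_po_ex_above[OF rp, of "{x, y, z}" z] by auto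
    then show thesis
      using that[of v] False \<open>\<not> le x z\<close> assms(2,3)
      unfolding Low_def lt_def incomp_def by auto
  qed
  obtain u where u: "Low le u y z" "incomp le u v"
    using random_po_ex_Low[OF rp, of "{v}" y z] assms(3) v(3) by auto
  obtain s where "Low le s u v"
    using random_po_ex_Low[OF rp, of "{}" u v] u(2) by auto
  then show ?thesis
    using v u by blast
qed

lemma Urel_iff_Low_pattern:
  assumes "random_po le"
  shows "Urel le x y z \<longleftrightarrow>
    (\<exists>v u s. Low le y x v \<and> Low le z x v \<and> Low le u y z \<and> Low le s u v)"
proof
  assume "Urel le x y z"
  then consider "lt le y x" "incomp le y z" | "lt le z x" "incomp le z y"
    unfolding Urel_def incomp_def by blast
  then show "\<exists>v u s. Low le y x v \<and> Low le z x v \<and> Low le u y z \<and> Low le s u v"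
  proof cases
    case 1
    then show ?thesis
      using random_po_ex_Low_pattern_Urel[OF assms] by blast
  next
    case 2
    then show ?thesis
      using random_po_ex_Low_pattern_Urel[OF assms, of z x y] Low_commute[of le _ z y] by blast
  qed
qed (use Urel_if_Low_pattern[OF random_po_order(3)[OF assms]] in blast)

lemma random_po_ex_Low_pattern_Abv:
  assumes rp: "random_po le" and "incomp le x z" "incomp le y z"
  shows "\<exists>u t. Low le u z y \<and> Low le t u x"
proof -
  obtain u where u: "Low le u z y" "incomp le u x"
    using random_po_ex_Low[OF rp, of "{x}" z y] assms(2,3) unfolding incomp_def by auto
  obtain t where "Low le t u x"
    using random_po_ex_Low[OF rp, of "{}" u x] u(2) by auto
  then show ?thesis
    using u(1) by blast
qed

lemma Abv_iff_Urel_Low_pattern: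
  assumes "random_po le"
  shows "Abv le x y z \<longleftrightarrow> Urel le x y z \<and> (\<exists>u t. Low le u y z \<and> Low le t u x)"
proof
  assume abv: "Abv le x y z"
  then consider "incomp le x z" "incomp le y z" | "incomp le x y" "incomp le z y"
    unfolding Abv_def by (elim disjE conjE)
  then have "\<exists>u t. Low le u y z \<and> Low le t u x"
  proof cases
    case 1
    then obtain u t where "Low le u z y" "Low le t u x"
      using random_po_ex_Low_pattern_Abv[OF assms] by blast
    then show ?thesis
      using Low_commute[of le u z y] by blast
  next
    case 2
    then show ?thesis
      using random_po_ex_Low_pattern_Abv[OF assms] by blast
  qed
  moreover have "Urel le x y z"
    using abv unfolding Abv_def Urel_def incomp_def by blast
  ultimately show "Urel le x y z \<and> (\<exists>u t. Low le u y z \<and> Low le t u x)"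
    by blast
qed (use Abv_if_Urel_Low_pattern[OF random_po_order(3)[OF assms]] in blast)

text \<open>Variables 3, 4, 5 are v, u, s of \<open>Urel_iff_Low_pattern\<close>; 6, 7 are u, t of
\<open>Abv_iff_Urel_Low_pattern\<close>.\<close>

definition Urel_pp :: "pp_atom list" where
  "Urel_pp = [RAt 1 0 3, RAt 2 0 3, RAt 4 1 2, RAt 5 4 3]"

definition Abv_pp :: "pp_atom list" where
  "Abv_pp = Urel_pp @ [RAt 6 1 2, RAt 7 6 0]"

lemma pp_definable3_Urel:
  assumes "random_po le"
  shows "pp_definable3 (Low le) (Urel le)"
  unfolding pp_definable3_def
proof (intro exI allI)
  fix x y z
  show "Urel le x y z \<longleftrightarrow> (\<exists>w. w 0 = x \<and> w 1 = y \<and> w 2 = z \<and>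
          (\<forall>a\<in>set Urel_pp. sat_atom (Low le) w a))"
    unfolding Urel_iff_Low_pattern[OF assms]
  proof
    assume "\<exists>v u s. Low le y x v \<and> Low le z x v \<and> Low le u y z \<and> Low le s u v"
    then obtain v u s where "Low le y x v" "Low le z x v" "Low le u y z" "Low le s u v"
      by blast
    then show "\<exists>w. w 0 = x \<and> w 1 = y \<and> w 2 = z \<and> (\<forall>a\<in>set Urel_pp. sat_atom (Low le) w a)"
      by (intro exI[of _ "nth [x, y, z, v, u, s]"]) (simp add: Urel_pp_def numeral_eq_Suc)
  qed (auto simp: Urel_pp_def)
qed

lemma pp_definable3_Abv:
  assumes "random_po le"
  shows "pp_definable3 (Low le) (Abv le)"
  unfolding pp_definable3_def
proof (intro exI allI)
  fix x y z
  show "Abv le x y z \<longleftrightarrow> (\<exists>w. w 0 = x \<and> w 1 = y \<and> w 2 = z \<and>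
          (\<forall>a\<in>set Abv_pp. sat_atom (Low le) w a))"
    unfolding Abv_iff_Urel_Low_pattern[OF assms] Urel_iff_Low_pattern[OF assms]
  proof
    assume "(\<exists>v u s. Low le y x v \<and> Low le z x v \<and> Low le u y z \<and> Low le s u v) \<and>
      (\<exists>u t. Low le u y z \<and> Low le t u x)"
    then obtain v u s u' t where "Low le y x v" "Low le z x v" "Low le u y z" "Low le s u v"
      "Low le u' y z" "Low le t u' x"
      by blast
    then show "\<exists>w. w 0 = x \<and> w 1 = y \<and> w 2 = z \<and> (\<forall>a\<in>set Abv_pp. sat_atom (Low le) w a)"
      by (intro exI[of _ "nth [x, y, z, v, u, s, u', t]"])
        (simp add: Abv_pp_def Urel_pp_def numeral_eq_Suc)
  qed (auto simp: Abv_pp_def Urel_pp_def)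
qed

theorem lemma43:
  fixes le :: "'a \<Rightarrow> 'a \<Rightarrow> bool"
  assumes "random_po le"
  shows "pp_definable3 (Low le) (Abv le) \<and> pp_definable3 (Low le) (Urel le)"
  using pp_definable3_Abv[OF assms] pp_definable3_Urel[OF assms] ..

end
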